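(* Let $(t_i)_{i\in\mathbb{N}}$ be a sequence of real numbers that are algebraically independent over $\mathbb{Q}$, and let $A=\{P_{i,j} : i,j\in\mathbb{N},\ i<j\}\subseteq\mathbb{R}^2$, where $P_{i,j} = (t_i + t_j,\ t_i^2 + t_it_j + t_j^2)$. Then for every finite subset $P\subseteq A$ there exists $P'\subseteq P$ with $|P'|\ge |P|/2$ such that no three points of $P'$ are collinear. *)

theory Defs
  imports "HOL-Analysis.Analysis"
begin

text \<open>Multivariate polynomials
 with rational coefficients in the variables X_0, X_1, ... are represented explicitly:
 a monomial is an exponent vector e :: nat => nat with finite support, and a polynomial
 is a finite set E of monomials together with coefficients c.\<close>

definition monomial_val :: "(nat \<Rightarrow> real) \<Rightarrow> (nat \<Rightarrow> nat) \<Rightarrow> real" where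
  "monomial_val t e = (\<Prod>i\<in>{i. e i \<noteq> 0}. t i ^ e i)"

definition alg_indep_Q :: "(nat \<Rightarrow> real) \<Rightarrow> bool" where
  "alg_indep_Q t \<longleftrightarrow>
     (\<forall>(E :: (nat \<Rightarrow> nat) set) (c :: (nat \<Rightarrow> nat) \<Rightarrow> rat).
        finite E \<longrightarrow> (\<forall>e\<in>E. finite {i. e i \<noteq> 0}) \<longrightarrow>
        (\<Sum>e\<in>E. of_rat (c e) * monomial_val t e) = 0 \<longrightarrow> (\<forall>e\<in>E. c e = 0))"

definition point_set :: "(nat \<Rightarrow> real) \<Rightarrow> (real \<times> real) set" where
  "point_set t = {(t i + t j, (t i)^2 + t i * t j + (t j)^2) | i j. i < j}"

definition no_three_collinear :: "(real \<times> real) set \<Rightarrow> bool" where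
  "no_three_collinear S \<longleftrightarrow> (\<forall>T\<subseteq>S. card T = 3 \<longrightarrow> \<not> collinear T)"

end

theory Submission
  imports Defs
begin

(* View P_{i,j} as the edge {i, j} of the complete graph on the indices. Three points are
   collinear iff a determinant vanishes, and this determinant is a polynomial with rational
   coefficients in the t_i; by algebraic independence it then vanishes for all real values of
   the variables. It is not identically zero unless the three edges form a triangle (for the
   triangle {i, j, k} the three points do lie on a line of slope t_i + t_j + t_k). The edges
   crossing a cut (X, -X) contain no triangle, and every finite graph has a cut containing at
   least half of its edges: add the vertices one at a time, each on the side that cuts at
   least half of its edges to the earlier vertices. *)

definition rat_polynomial_function :: "((nat \<Rightarrow> real) \<Rightarrow> real) \<Rightarrow> bool" where
  "rat_polynomial_function F \<longleftrightarrow>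
     (\<exists>E c. finite E \<and> (\<forall>e\<in>E. finite {i. e i \<noteq> 0}) \<and>
        (\<forall>s. F s = (\<Sum>e\<in>E. of_rat (c e) * monomial_val s e)))"

lemma monomial_val_eq_prod:
  assumes "finite S" "{i. e i \<noteq> 0} \<subseteq> S"
  shows "monomial_val s e = (\<Prod>i\<in>S. s i ^ e i)"
  unfolding monomial_val_def by (rule prod.mono_neutral_left[OF assms]) auto

lemma monomial_val_add:
  assumes "finite {i. e i \<noteq> 0}" "finite {i. f i \<noteq> 0}"
  shows "monomial_val s (\<lambda>i. e i + f i) = monomial_val s e * monomial_val s f"
proof -
  let ?S = "{i. e i \<noteq> 0} \<union> {i. f i \<noteq> 0}"
  have S: "finite ?S" using assms by blast
  have "monomial_val s (\<lambda>i. e i + f i) = (\<Prod>i\<in>?S. s i ^ e i * s i ^ f i)"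
    by (subst monomial_val_eq_prod[OF S]) (auto simp: power_add)
  also have "\<dots> = monomial_val s e * monomial_val s f"
    by (simp add: prod.distrib monomial_val_eq_prod[OF S])
  finally show ?thesis .
qed

lemma alg_indep_Q_polynomial_vanishes:
  assumes "alg_indep_Q t" "rat_polynomial_function F" "F t = 0"
  shows "F s = 0"
proof -
  obtain E c where E: "finite E" "\<forall>e\<in>E. finite {i. e i \<noteq> 0}"
    and F: "\<And>s. F s = (\<Sum>e\<in>E. of_rat (c e) * monomial_val s e)"
    using assms(2) unfolding rat_polynomial_function_def by blast
  have "\<forall>e\<in>E. c e = 0"
    using assms(1) E assms(3) unfolding alg_indep_Q_def F by blast
  then show ?thesis by (simp add: F)
qed

lemma rat_polynomial_function_const: "rat_polynomial_function (\<lambda>s. of_rat r)"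
  unfolding rat_polynomial_function_def
  by (rule exI[of _ "{\<lambda>i. 0}"], rule exI[of _ "\<lambda>_. r"]) (simp add: monomial_val_def)

lemma rat_polynomial_function_var: "rat_polynomial_function (\<lambda>s. s k)"
proof -
  define e :: "nat \<Rightarrow> nat" where "e = (\<lambda>i. if i = k then 1 else 0)"
  have supp: "{i. e i \<noteq> 0} = {k}" by (auto simp: e_def)
  have "s k = (\<Sum>e'\<in>{e}. of_rat 1 * monomial_val s e')" for s
    by (simp add: monomial_val_def supp) (simp add: e_def)
  then show ?thesis
    unfolding rat_polynomial_function_def
    by (intro exI[of _ "{e}"] exI[of _ "\<lambda>_. 1"]) (use supp in auto)
qed

lemma rat_polynomial_function_add:
  assumes "rat_polynomial_function F" "rat_polynomial_function G"
  shows "rat_polynomial_function (\<lambda>s. F s + G s)"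
proof -
  obtain E1 c1 where E1: "finite E1" "\<forall>e\<in>E1. finite {i. e i \<noteq> 0}"
    and F: "\<And>s. F s = (\<Sum>e\<in>E1. of_rat (c1 e) * monomial_val s e)"
    using assms(1) unfolding rat_polynomial_function_def by blast
  obtain E2 c2 where E2: "finite E2" "\<forall>e\<in>E2. finite {i. e i \<noteq> 0}"
    and G: "\<And>s. G s = (\<Sum>e\<in>E2. of_rat (c2 e) * monomial_val s e)"
    using assms(2) unfolding rat_polynomial_function_def by blast
  define c where "c e = (if e \<in> E1 then c1 e else 0) + (if e \<in> E2 then c2 e else 0)" for e
  have U: "finite (E1 \<union> E2)" using E1 E2 by blast
  have "F s + G s = (\<Sum>e\<in>E1 \<union> E2. of_rat (c e) * monomial_val s e)" for s
  proof -
    have "(\<Sum>e\<in>E1 \<union> E2. of_rat (if e \<in> E1 then c1 e else 0) * monomial_val s e) = F s"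
      unfolding F by (rule sum.mono_neutral_cong_right) (use U in auto)
    moreover have "(\<Sum>e\<in>E1 \<union> E2. of_rat (if e \<in> E2 then c2 e else 0) * monomial_val s e) = G s"
      unfolding G by (rule sum.mono_neutral_cong_right) (use U in auto)
    ultimately show ?thesis
      unfolding c_def of_rat_add distrib_right sum.distrib by simp
  qed
  then show ?thesis
    unfolding rat_polynomial_function_def using U E1(2) E2(2) by blast
qed

lemma rat_polynomial_function_mult:
  assumes "rat_polynomial_function F" "rat_polynomial_function G"
  shows "rat_polynomial_function (\<lambda>s. F s * G s)"
proof -
  obtain E1 c1 where E1: "finite E1" "\<forall>e\<in>E1. finite {i. e i \<noteq> 0}"
    and F: "\<And>s. F s = (\<Sum>e\<in>E1. of_rat (c1 e) * monomial_val s e)"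
    using assms(1) unfolding rat_polynomial_function_def by blast
  obtain E2 c2 where E2: "finite E2" "\<forall>e\<in>E2. finite {i. e i \<noteq> 0}"
    and G: "\<And>s. G s = (\<Sum>e\<in>E2. of_rat (c2 e) * monomial_val s e)"
    using assms(2) unfolding rat_polynomial_function_def by blast
  define plus :: "(nat \<Rightarrow> nat) \<times> (nat \<Rightarrow> nat) \<Rightarrow> nat \<Rightarrow> nat"
    where "plus = (\<lambda>(a, b) i. a i + b i)"
  define E where "E = plus ` (E1 \<times> E2)"
  define c where "c e = (\<Sum>p\<in>{p \<in> E1 \<times> E2. plus p = e}. c1 (fst p) * c2 (snd p))" for e
  have fin: "finite (E1 \<times> E2)" "finite E" using E1 E2 by (auto simp: E_def)
  have supp: "\<forall>e\<in>E. finite {i. e i \<noteq> 0}"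
  proof
    fix e assume "e \<in> E"
    then obtain a b where ab: "a \<in> E1" "b \<in> E2" "e = (\<lambda>i. a i + b i)"
      by (auto simp: E_def plus_def)
    then have "{i. e i \<noteq> 0} \<subseteq> {i. a i \<noteq> 0} \<union> {i. b i \<noteq> 0}" by auto
    then show "finite {i. e i \<noteq> 0}" using ab E1(2) E2(2) finite_subset by blast
  qed
  have "F s * G s = (\<Sum>e\<in>E. of_rat (c e) * monomial_val s e)" for s
  proof -
    have "F s * G s = (\<Sum>p\<in>E1 \<times> E2. of_rat (c1 (fst p) * c2 (snd p)) * monomial_val s (plus p))"
      unfolding F G sum_product sum.cartesian_product
      using E1(2) E2(2) by (intro sum.cong) (auto simp: plus_def of_rat_mult monomial_val_add)
    also have "\<dots> = (\<Sum>e\<in>E. \<Sum>p\<in>{p \<in> E1 \<times> E2. plus p = e}.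
                        of_rat (c1 (fst p) * c2 (snd p)) * monomial_val s (plus p))"
      by (rule sum.group[symmetric]) (use fin in \<open>auto simp: E_def\<close>)
    also have "\<dots> = (\<Sum>e\<in>E. of_rat (c e) * monomial_val s e)"
      unfolding c_def of_rat_sum sum_distrib_right by (intro sum.cong) auto
    finally show ?thesis .
  qed
  then show ?thesis
    unfolding rat_polynomial_function_def using fin supp by blast
qed

lemma rat_polynomial_function_diff:
  assumes "rat_polynomial_function F" "rat_polynomial_function G"
  shows "rat_polynomial_function (\<lambda>s. F s - G s)"
  using rat_polynomial_function_add[OF assms(1)
      rat_polynomial_function_mult[OF rat_polynomial_function_const[of "-1"] assms(2)]]
  by simp

lemma rat_polynomial_function_power:
  assumes "rat_polynomial_function F"
  shows "rat_polynomial_function (\<lambda>s. F s ^ n)"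
proof (induction n)
  case 0
  show ?case using rat_polynomial_function_const[of 1] by simp
next
  case (Suc n)
  show ?case using rat_polynomial_function_mult[OF assms Suc] by simp
qed

lemmas rat_polynomial_function_intros =
  rat_polynomial_function_var rat_polynomial_function_add rat_polynomial_function_mult
  rat_polynomial_function_diff rat_polynomial_function_power

lemma alg_indep_Q_imp_inj:
  assumes "alg_indep_Q t"
  shows "inj t"
proof (rule injI, rule ccontr)
  fix i j assume "t i = t j" "i \<noteq> j"
  have "rat_polynomial_function (\<lambda>s. s i - s j)"
    by (intro rat_polynomial_function_intros)
  from alg_indep_Q_polynomial_vanishes[OF assms this, of "\<lambda>k. if k = i then 1 else 0"]
  show False using \<open>t i = t j\<close> \<open>i \<noteq> j\<close> by simp
qed

definition point :: "(nat \<Rightarrow> real) \<Rightarrow> nat \<Rightarrow> nat \<Rightarrow> real \<times> real" where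
  "point s i j = (s i + s j, (s i)^2 + s i * s j + (s j)^2)"

lemma point_commute: "point s i j = point s j i"
  unfolding point_def by (simp add: algebra_simps)

lemma point_set_eq: "point_set t = {point t i j | i j. i < j}"
  unfolding point_set_def point_def ..

definition orientation :: "real \<times> real \<Rightarrow> real \<times> real \<Rightarrow> real \<times> real \<Rightarrow> real" where
  "orientation p q r = (fst p - fst q) * (snd r - snd q) - (fst r - fst q) * (snd p - snd q)"

lemma collinear_imp_orientation_eq_0:
  assumes "collinear {p, q, r :: real \<times> real}"
  shows "orientation p q r = 0"
proof -
  obtain u where u: "\<forall>x\<in>{p, q, r}. \<forall>y\<in>{p, q, r}. \<exists>c. x - y = c *\<^sub>R u"
    using assms unfolding collinear_def by blast
  then obtain a b where ab: "p - q = a *\<^sub>R u" "r - q = b *\<^sub>R u" by blast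
  have "fst p - fst q = a * fst u" "snd p - snd q = a * snd u"
    using arg_cong[OF ab(1), of fst] arg_cong[OF ab(1), of snd] by auto
  moreover have "fst r - fst q = b * fst u" "snd r - snd q = b * snd u"
    using arg_cong[OF ab(2), of fst] arg_cong[OF ab(2), of snd] by auto
  ultimately show ?thesis unfolding orientation_def by simp
qed

lemma orientation_parabola:
  "orientation (a, a^2) (b, b^2) (c, c^2) = (a - b) * (c - b) * (c - a)"
  unfolding orientation_def by (simp add: power2_eq_square) algebra

lemma orientation_point_path:
  "orientation (point s u v) (point s u w) (point s u' v) = (s v - s w) * (s u' - s u) * (s u' - s w)"
  unfolding orientation_def point_def by (simp add: power2_eq_square) algebra

lemma not_collinear_point_by_specialization:
  assumes "alg_indep_Q t" "orientation (point s a b) (point s c d) (point s x y) \<noteq> 0"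
  shows "\<not> collinear {point t a b, point t c d, point t x y}"
proof
  assume "collinear {point t a b, point t c d, point t x y}"
  then have "orientation (point t a b) (point t c d) (point t x y) = 0"
    by (rule collinear_imp_orientation_eq_0)
  moreover have "rat_polynomial_function (\<lambda>s. orientation (point s a b) (point s c d) (point s x y))"
    unfolding orientation_def point_def fst_conv snd_conv by (intro rat_polynomial_function_intros)
  ultimately show False
    using alg_indep_Q_polynomial_vanishes[OF assms(1)] assms(2) by blast
qed

lemma not_collinear_cut_points_distinct_outer:
  assumes "alg_indep_Q t" "x1 \<in> X" "x2 \<in> X" "x3 \<in> X" "y1 \<notin> X" "y2 \<notin> X" "y3 \<notin> X"
    and "distinct [y1, y2, y3]"
  shows "\<not> collinear {point t x1 y1, point t x2 y2, point t x3 y3}"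
proof (rule not_collinear_point_by_specialization[OF assms(1)])
  (* Specialising the variables indexed by X to 0 moves the points onto the parabola y = x^2. *)
  define s where "s i = (if i \<in> X then 0 else real i)" for i
  have "point s x y = (real y, (real y)^2)" if "x \<in> X" "y \<notin> X" for x y
    using that by (simp add: point_def s_def)
  then show "orientation (point s x1 y1) (point s x2 y2) (point s x3 y3) \<noteq> 0"
    using assms(2-8) by (simp add: orientation_parabola)
qed

lemma not_collinear_point_path:
  assumes "inj t" "u \<noteq> u'" "v \<noteq> w" "u' \<noteq> w"
  shows "\<not> collinear {point t u v, point t u w, point t u' v}"
proof
  assume "collinear {point t u v, point t u w, point t u' v}"
  then have "(t v - t w) * (t u' - t u) * (t u' - t w) = 0"
    using collinear_imp_orientation_eq_0 orientation_point_path by metis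
  then show False
    using assms by (auto dest: injD)
qed

lemma not_collinear_cut_points:
  assumes "alg_indep_Q t" "x1 \<in> X" "x2 \<in> X" "x3 \<in> X" "y1 \<notin> X" "y2 \<notin> X" "y3 \<notin> X"
    and "point t x1 y1 \<noteq> point t x2 y2" "point t x1 y1 \<noteq> point t x3 y3"
        "point t x2 y2 \<noteq> point t x3 y3"
  shows "\<not> collinear {point t x1 y1, point t x2 y2, point t x3 y3}"
proof -
  have path: "\<not> collinear {point t u v, point t u w, point t u' v}"
    if "u \<in> X" "u' \<in> X" "w \<notin> X" "u \<noteq> u'" "v \<noteq> w" for u u' v w
    using not_collinear_point_path[OF alg_indep_Q_imp_inj[OF assms(1)]] that by blast
  consider "distinct [y1, y2, y3]" | "distinct [x1, x2, x3]"
    | "(x1 = x2 \<and> y1 \<noteq> y2 \<or> x1 = x3 \<and> y1 \<noteq> y3 \<or> x2 = x3 \<and> y2 \<noteq> y3) \<and>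
       (y1 = y2 \<and> x1 \<noteq> x2 \<or> y1 = y3 \<and> x1 \<noteq> x3 \<or> y2 = y3 \<and> x2 \<noteq> x3)"
    using assms(8-10) by auto
  then show ?thesis
  proof cases
    case 1
    then show ?thesis using not_collinear_cut_points_distinct_outer assms(1-7) by blast
  next
    case 2
    then show ?thesis
      using not_collinear_cut_points_distinct_outer[OF assms(1), of y1 "-X" y2 y3 x1 x2 x3]
        assms(2-7) by (simp add: point_commute)
  next
    case 3
    (* the three edges form a path u'-v-u-w with u, u' in X *)
    then show ?thesis
      using assms(2-7) path[of x1 x3 y1 y2] path[of x2 x3 y2 y1] path[of x1 x2 y1 y3]
        path[of x3 x2 y3 y1] path[of x2 x1 y2 y3] path[of x3 x1 y3 y2]
      by (auto simp: insert_commute)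
  qed
qed

lemma no_three_collinear_subset:
  "no_three_collinear S \<Longrightarrow> T \<subseteq> S \<Longrightarrow> no_three_collinear T"
  unfolding no_three_collinear_def by blast

lemma no_three_collinear_cut_points:
  assumes "alg_indep_Q t"
  shows "no_three_collinear {point t i j | i j. (i \<in> X) \<noteq> (j \<in> X)}"
  unfolding no_three_collinear_def
proof (intro allI impI)
  fix T assume T: "T \<subseteq> {point t i j | i j. (i \<in> X) \<noteq> (j \<in> X)}" "card T = 3"
  from T(2) obtain p1 p2 p3 where p: "T = {p1, p2, p3}" "p1 \<noteq> p2" "p1 \<noteq> p3" "p2 \<noteq> p3"
    unfolding card_3_iff by blast
  have cut: "\<exists>x y. x \<in> X \<and> y \<notin> X \<and> p = point t x y" if "p \<in> T" for p
  proof -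
    obtain i j where "(i \<in> X) \<noteq> (j \<in> X)" "p = point t i j"
      using T(1) \<open>p \<in> T\<close> by blast
    then show ?thesis
      using point_commute[of t i j] by (cases "i \<in> X") blast+
  qed
  obtain x1 y1 x2 y2 x3 y3 where
    "x1 \<in> X" "y1 \<notin> X" "p1 = point t x1 y1"
    "x2 \<in> X" "y2 \<notin> X" "p2 = point t x2 y2"
    "x3 \<in> X" "y3 \<notin> X" "p3 = point t x3 y3"
    using cut[of p1] cut[of p2] cut[of p3] p(1) by auto
  then show "\<not> collinear T"
    using not_collinear_cut_points[OF assms] p by simp
qed

definition cut_edges :: "'a set \<Rightarrow> ('a \<times> 'a) set \<Rightarrow> ('a \<times> 'a) set" where
  "cut_edges X E = {(i, j) \<in> E. (i \<in> X) \<noteq> (j \<in> X)}"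

lemma finite_cut_edges: "finite E \<Longrightarrow> finite (cut_edges X E)"
  unfolding cut_edges_def by (rule finite_subset[of _ E]) auto

lemma card_cut_edges_toggle:
  assumes "finite E" "\<forall>(i, j)\<in>E. i \<noteq> j \<and> v \<in> {i, j}"
  shows "card (cut_edges (X - {v}) E) + card (cut_edges (insert v X) E) = card E"
proof -
  have "cut_edges (X - {v}) E \<union> cut_edges (insert v X) E = E"
       "cut_edges (X - {v}) E \<inter> cut_edges (insert v X) E = {}"
    using assms(2) unfolding cut_edges_def by auto
  then show ?thesis
    using assms(1) by (metis card_Un_disjoint finite_cut_edges)
qed

lemma exists_large_cut:
  assumes "finite V" "E \<subseteq> V \<times> V" "\<forall>(i, j)\<in>E. i \<noteq> j"
  shows "\<exists>X. card E \<le> 2 * card (cut_edges X E)"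
  using assms
proof (induction V arbitrary: E rule: finite_induct)
  case empty
  then show ?case by simp
next
  case (insert v V)
  define E1 where "E1 = {(i, j) \<in> E. v \<notin> {i, j}}"
  define E2 where "E2 = E - E1"
  have "finite E"
    using insert.hyps(1) insert.prems(1) finite_subset by blast
  moreover have E1_sub: "E1 \<subseteq> E" by (auto simp: E1_def)
  ultimately have fin: "finite E1" "finite E2" by (auto simp: E2_def intro: finite_subset)
  have "E1 \<subseteq> V \<times> V" "\<forall>(i, j)\<in>E1. i \<noteq> j"
    using insert.prems by (auto simp: E1_def)
  then obtain X where X: "card E1 \<le> 2 * card (cut_edges X E1)"
    using insert.IH by blast
  have toggle: "card (cut_edges (X - {v}) E2) + card (cut_edges (insert v X) E2) = card E2"
    using insert.prems(2) by (intro card_cut_edges_toggle fin) (auto simp: E1_def E2_def)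
  have split: "card (cut_edges Y E) = card (cut_edges Y E1) + card (cut_edges Y E2)" for Y
  proof -
    have "cut_edges Y E = cut_edges Y E1 \<union> cut_edges Y E2"
         "cut_edges Y E1 \<inter> cut_edges Y E2 = {}"
      by (auto simp: cut_edges_def E1_def E2_def)
    then show ?thesis
      using fin by (simp add: card_Un_disjoint finite_cut_edges)
  qed
  have E1_unchanged: "cut_edges (X - {v}) E1 = cut_edges X E1"
                     "cut_edges (insert v X) E1 = cut_edges X E1"
    by (auto simp: cut_edges_def E1_def)
  have "card E = card E1 + card E2"
    using card_Diff_subset[OF fin(1) E1_sub] card_mono[OF \<open>finite E\<close> E1_sub]
    by (simp add: E2_def)
  then have "card E \<le> 2 * card (cut_edges (X - {v}) E) \<or>
            card E \<le> 2 * card (cut_edges (insert v X) E)"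
    using X toggle split[of "X - {v}", unfolded E1_unchanged]
      split[of "insert v X", unfolded E1_unchanged] by linarith
  then show ?case by blast
qed

lemma exists_large_cut_subset:
  fixes f :: "'a \<Rightarrow> 'a \<Rightarrow> 'b"
  assumes "finite P" "\<forall>p\<in>P. \<exists>i j. i \<noteq> j \<and> p = f i j"
  shows "\<exists>X. \<exists>P'\<subseteq>P. card P \<le> 2 * card P' \<and>
                    (\<forall>p\<in>P'. \<exists>i j. (i \<in> X) \<noteq> (j \<in> X) \<and> p = f i j)"
proof -
  from assms(2) have "\<forall>p\<in>P. \<exists>e. fst e \<noteq> snd e \<and> p = f (fst e) (snd e)"
    by fastforce
  from bchoice[OF this] obtain edge where edge:
    "\<forall>p\<in>P. fst (edge p) \<noteq> snd (edge p) \<and> p = f (fst (edge p)) (snd (edge p))"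
    by blast
  then have inj: "inj_on edge P"
    by (metis inj_onI)
  define E where "E = edge ` P"
  define V where "V = fst ` E \<union> snd ` E"
  have "finite E" "finite V"
    using assms(1) by (simp_all add: E_def V_def)
  moreover have "E \<subseteq> V \<times> V"
    using subset_fst_snd[of E] unfolding V_def by blast
  moreover have "\<forall>(i, j)\<in>E. i \<noteq> j"
    using edge unfolding E_def by auto
  ultimately obtain X where X: "card E \<le> 2 * card (cut_edges X E)"
    using exists_large_cut by blast
  define P' where "P' = {p \<in> P. edge p \<in> cut_edges X E}"
  have "cut_edges X E \<subseteq> edge ` P"
    unfolding E_def cut_edges_def by blast
  then have "edge ` P' = cut_edges X E"
    unfolding P'_def by blast
  moreover have "inj_on edge P'"
    using inj by (rule inj_on_subset) (simp add: P'_def)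
  ultimately have "card P' = card (cut_edges X E)"
    using card_image by fastforce
  moreover have "card P = card E"
    unfolding E_def using card_image[OF inj] by simp
  moreover have "\<forall>p\<in>P'. \<exists>i j. (i \<in> X) \<noteq> (j \<in> X) \<and> p = f i j"
    using edge unfolding P'_def cut_edges_def by fastforce
  moreover have "P' \<subseteq> P"
    unfolding P'_def by blast
  ultimately show ?thesis
    using X by (intro exI[of _ X] exI[of _ P']) auto
qed

theorem mainTheorem3:
  fixes t :: "nat \<Rightarrow> real"
  assumes "alg_indep_Q t"
  shows "\<forall>P \<subseteq> point_set t. finite P \<longrightarrow>
           (\<exists>P' \<subseteq> P. real (card P') \<ge> real (card P) / 2 \<and> no_three_collinear P')"
proof (intro allI impI)
  fix P assume P: "P \<subseteq> point_set t" "finite P"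
  then have "\<forall>p\<in>P. \<exists>i j. i \<noteq> j \<and> p = point t i j"
    unfolding point_set_eq by (blast dest: less_imp_neq)
  then obtain X P' where P': "P' \<subseteq> P" "card P \<le> 2 * card P'"
    and "\<forall>p\<in>P'. \<exists>i j. (i \<in> X) \<noteq> (j \<in> X) \<and> p = point t i j"
    using exists_large_cut_subset[OF P(2)] by blast
  then have "P' \<subseteq> {point t i j | i j. (i \<in> X) \<noteq> (j \<in> X)}"
    by blast
  then have "no_three_collinear P'"
    using no_three_collinear_subset no_three_collinear_cut_points[OF assms] by blast
  then show "\<exists>P' \<subseteq> P. real (card P') \<ge> real (card P) / 2 \<and> no_three_collinear P'"
    using P' by auto
qed

end
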